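(* Let $A,B\in\operatorname{Sym}(n,\mathbb{R})$ with $\operatorname{tr}A=\operatorname{tr}B=0$, and assume $\Gamma_A\subset\Gamma_B$, where $\Gamma_M:=\{z\in\mathbb{R}^n:{}^tzMz\le0\}$. Then there is $c\in\mathbb{R}$ with $B=cA$. *)

theory Defs
  imports "HOL-Analysis.Analysis"
begin

definition Gamma :: "real^'n^'n \<Rightarrow> (real^'n) set" where
  "Gamma M = {z. z \<bullet> (M *v z) \<le> 0}"

end

theory Submission
  imports Defs
begin

text \<open>Write \<open>q\<^sub>M z = z \<bullet> (M *v z)\<close>. For \<open>q\<^sub>A z > 0 > q\<^sub>A w\<close> the polynomial
  \<open>t \<mapsto> q\<^sub>A (z + t w)\<close> has one root of each sign, and on that line
  \<open>- q\<^sub>A w \<cdot> q\<^sub>B - (- q\<^sub>B w) \<cdot> q\<^sub>A\<close> is affine in \<open>t\<close>; evaluating at a well-chosen root, where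
  \<open>q\<^sub>B \<le> 0\<close> by the cone inclusion, shows \<open>q\<^sub>B z / q\<^sub>A z \<le> q\<^sub>B w / q\<^sub>A w\<close>. A real \<open>c\<close> between
  these two sets of ratios makes \<open>c A - B\<close> positive semidefinite, and a positive semidefinite
  symmetric matrix with trace zero vanishes.\<close>

abbreviation quad_form :: "real^'n^'n \<Rightarrow> real^'n \<Rightarrow> real" where
  "quad_form M z \<equiv> z \<bullet> (M *v z)"

lemma symmetric_matrix_inner_commute:
  fixes M :: "real^'n^'n"
  assumes "transpose M = M"
  shows "y \<bullet> (M *v x) = x \<bullet> (M *v y)"
  by (metis assms dot_lmul_matrix inner_commute vector_transpose_matrix)

lemma quad_form_add_scaleR:
  fixes M :: "real^'n^'n"
  assumes "transpose M = M"
  shows "quad_form M (x + t *\<^sub>R y) =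
    quad_form M x + 2 * t * (x \<bullet> (M *v y)) + t\<^sup>2 * quad_form M y"
  using symmetric_matrix_inner_commute[OF assms, of y x]
  by (simp add: matrix_vector_right_distrib matrix_vector_mult_scaleR inner_add_left
      inner_add_right algebra_simps power2_eq_square)

lemma quad_form_axis: "axis i 1 \<bullet> ((M::real^'n^'n) *v axis j 1) = M $ i $ j"
  by (simp add: inner_axis' matrix_vector_mult_basis column_def)

lemma quad_form_scaleR_diff:
  "quad_form (c *\<^sub>R A - B) z = c * quad_form A z - quad_form B z"
  by (simp add: matrix_vector_mult_diff_rdistrib scaleR_matrix_vector_assoc[symmetric]
      inner_diff_right)

lemma psd_trace_zero_imp_zero:
  fixes P :: "real^'n^'n"
  assumes sym: "transpose P = P" and trace: "trace P = 0"
    and psd: "\<And>z. quad_form P z \<ge> 0"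
  shows "P = 0"
proof -
  have diag_nonneg: "P $ i $ i \<ge> 0" for i
    using psd[of "axis i 1"] by (simp add: quad_form_axis)
  with trace have diag_zero: "P $ i $ i = 0" for i
    by (simp add: trace_def sum_nonneg_eq_0_iff)
  have "P $ i $ j = 0" for i j
  proof (cases "i = j")
    case True
    then show ?thesis by (simp add: diag_zero)
  next
    case False
    have "0 \<le> 2 * t * P $ i $ j" for t
      using psd[of "axis i 1 + t *\<^sub>R axis j 1"] False
      by (simp add: quad_form_add_scaleR[OF sym] quad_form_axis diag_zero)
    from this[of 1] this[of "-1"] show ?thesis by simp
  qed
  then show ?thesis by (simp add: vec_eq_iff)
qed

lemma trace_zero_indefinite:
  fixes A :: "real^'n^'n"
  assumes "transpose A = A" "trace A = 0" "quad_form A z > 0"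
  shows "\<exists>w. quad_form A w < 0"
proof (rule ccontr)
  assume "\<nexists>w. quad_form A w < 0"
  then have "A = 0"
    using psd_trace_zero_imp_zero[OF assms(1,2)] by (meson not_le)
  with assms(3) show False by simp
qed

lemma quadratic_has_root_of_sign:
  fixes a b p L :: real
  assumes a: "a > 0" and b: "b > 0"
  obtains t where "a + 2 * t * p - t\<^sup>2 * b = 0" and "t * L \<ge> 0"
proof -
  define s where "s = sqrt (p\<^sup>2 + a * b)"
  have s_sq: "s\<^sup>2 = p\<^sup>2 + a * b"
    using a b unfolding s_def by simp
  have "\<bar>p\<bar> < s"
    using a b unfolding s_def by (simp add: real_less_rsqrt)
  then have pos: "(p + s) / b \<ge> 0" and neg: "(p - s) / b \<le> 0"
    using b by (simp_all add: divide_nonpos_pos)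
  have root: "a + 2 * t * p - t\<^sup>2 * b = 0" if "b * t - p = s \<or> b * t - p = - s" for t
  proof -
    have "b * (a + 2 * t * p - t\<^sup>2 * b) = (p\<^sup>2 + a * b) - (b * t - p)\<^sup>2"
      by (simp add: algebra_simps power2_eq_square)
    also have "\<dots> = 0"
      using that s_sq by auto
    finally show ?thesis
      using b by simp
  qed
  have root_pos: "a + 2 * ((p + s) / b) * p - ((p + s) / b)\<^sup>2 * b = 0"
    by (rule root) (use b in simp)
  have root_neg: "a + 2 * ((p - s) / b) * p - ((p - s) / b)\<^sup>2 * b = 0"
    by (rule root) (use b in simp)
  show ?thesis
  proof (cases "L \<ge> 0")
    case True
    show ?thesis
      by (rule that[OF root_pos mult_nonneg_nonneg[OF pos True]])
  next
    case False
    show ?thesis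
      using False by (intro that[OF root_neg] mult_nonpos_nonpos[OF neg]) simp
  qed
qed

lemma cone_inclusion_ratio_le:
  fixes A B :: "real^'n^'n"
  assumes sA: "transpose A = A" and sB: "transpose B = B"
    and cone: "Gamma A \<subseteq> Gamma B"
    and z: "quad_form A z > 0" and w: "quad_form A w < 0"
  shows "quad_form B z / quad_form A z \<le> quad_form B w / quad_form A w"
proof -
  define a b p where "a = quad_form A z" and "b = - quad_form A w" and "p = z \<bullet> (A *v w)"
  define \<alpha> \<beta> r where "\<alpha> = quad_form B z" and "\<beta> = - quad_form B w" and "r = z \<bullet> (B *v w)"
  have "a > 0" "b > 0"
    using z w by (simp_all add: a_def b_def)
  have "\<alpha> * b \<le> \<beta> * a"
  proof (rule ccontr)
    assume "\<not> \<alpha> * b \<le> \<beta> * a"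
    obtain t where root: "a + 2 * t * p - t\<^sup>2 * b = 0" and sign: "t * (r * b - p * \<beta>) \<ge> 0"
      using quadratic_has_root_of_sign[OF \<open>a > 0\<close> \<open>b > 0\<close>] .
    have "z + t *\<^sub>R w \<in> Gamma A"
      using root by (simp add: Gamma_def quad_form_add_scaleR[OF sA] a_def b_def p_def)
    with cone have "\<alpha> + 2 * t * r - t\<^sup>2 * \<beta> \<le> 0"
      by (auto simp: Gamma_def quad_form_add_scaleR[OF sB] \<alpha>_def \<beta>_def r_def)
    moreover have "b * (\<alpha> + 2 * t * r - t\<^sup>2 * \<beta>) - \<beta> * (a + 2 * t * p - t\<^sup>2 * b)
        = (\<alpha> * b - \<beta> * a) + 2 * (t * (r * b - p * \<beta>))"
      by (simp add: algebra_simps)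
    ultimately have "b * (\<alpha> + 2 * t * r - t\<^sup>2 * \<beta>) > 0"
      using root sign \<open>\<not> \<alpha> * b \<le> \<beta> * a\<close> by simp
    moreover have "b * (\<alpha> + 2 * t * r - t\<^sup>2 * \<beta>) \<le> 0"
      using \<open>b > 0\<close> \<open>\<alpha> + 2 * t * r - t\<^sup>2 * \<beta> \<le> 0\<close> by (simp add: mult_nonneg_nonpos)
    ultimately show False
      by simp
  qed
  then show ?thesis
    using \<open>a > 0\<close> \<open>b > 0\<close>
    by (simp add: a_def b_def \<alpha>_def \<beta>_def divide_simps mult.commute)
qed

lemma dominated_by_multiple:
  fixes f g :: "'a \<Rightarrow> real"
  assumes cone: "\<And>z. g z \<le> 0 \<Longrightarrow> f z \<le> 0"
    and ratio_le: "\<And>z w. g z > 0 \<Longrightarrow> g w < 0 \<Longrightarrow> f z / g z \<le> f w / g w"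
    and indefinite: "\<And>z. g z > 0 \<Longrightarrow> \<exists>w. g w < 0"
  obtains c where "\<And>z. f z \<le> c * g z"
proof (cases "\<exists>z. g z > 0")
  case False
  then show ?thesis
    using that[of 0] cone by (simp add: not_less)
next
  case True
  then obtain z0 w0 where "g z0 > 0" "g w0 < 0"
    using indefinite by blast
  define S where "S = (\<lambda>z. f z / g z) ` {z. g z > 0}"
  have "S \<noteq> {}"
    using \<open>g z0 > 0\<close> by (auto simp: S_def)
  have below: "x \<le> f w / g w" if "x \<in> S" "g w < 0" for x w
    using that ratio_le by (auto simp: S_def)
  have "bdd_above S"
    using below \<open>g w0 < 0\<close> by (intro bdd_aboveI[of S "f w0 / g w0"])
  have "f z \<le> Sup S * g z" for z
  proof (cases "g z" "0 :: real" rule: linorder_cases)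
    case less
    have "Sup S \<le> f z / g z"
      using \<open>S \<noteq> {}\<close> below less by (intro cSup_least) auto
    then show ?thesis
      using less by (simp add: le_divide_eq)
  next
    case equal
    then show ?thesis
      using cone by simp
  next
    case greater
    have "f z / g z \<le> Sup S"
      using \<open>bdd_above S\<close> greater by (intro cSup_upper) (auto simp: S_def)
    then show ?thesis
      using greater by (simp add: pos_divide_le_eq)
  qed
  then show ?thesis
    by (rule that)
qed

theorem theorem2p2:
  fixes A B :: "real^'n^'n"
  assumes "transpose A = A" and "transpose B = B"
    and "trace A = 0" and "trace B = 0"
    and "Gamma A \<subseteq> Gamma B"
  shows "\<exists>c::real. B = c *\<^sub>R A"
proof -
  obtain c where dominated: "\<And>z. quad_form B z \<le> c * quad_form A z"
  proof (rule dominated_by_multiple[where f = "quad_form B" and g = "quad_form A"])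
    show "quad_form B z \<le> 0" if "quad_form A z \<le> 0" for z
      using that assms(5) by (auto simp: Gamma_def)
    show "quad_form B z / quad_form A z \<le> quad_form B w / quad_form A w"
      if "quad_form A z > 0" "quad_form A w < 0" for z w
      by (rule cone_inclusion_ratio_le[OF assms(1,2,5) that])
    show "\<exists>w. quad_form A w < 0" if "quad_form A z > 0" for z
      by (rule trace_zero_indefinite[OF assms(1,3) that])
  qed (rule that)
  have "c *\<^sub>R A - B = 0"
  proof (rule psd_trace_zero_imp_zero)
    show "transpose (c *\<^sub>R A - B) = c *\<^sub>R A - B"
      using assms(1,2) by (simp add: transpose_def vec_eq_iff)
    show "trace (c *\<^sub>R A - B) = 0"
      using assms(3,4) by (simp add: trace_def sum_subtractf sum_distrib_left[symmetric])
    show "quad_form (c *\<^sub>R A - B) z \<ge> 0" for z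
      using dominated[of z] by (simp add: quad_form_scaleR_diff)
  qed
  then show ?thesis
    by auto
qed

end
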